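(* Consider the discrete Motsch–Tadmor model (as in the context) with initial data satisfying $\|\Delta^x(0)\|_F<M$ and $\|\Delta^v(0)\|_F<\kappa\int_{\|\Delta^x(0)\|_F}^M\psi(s)\,ds$, and let $C\in(0,1)$. Then for all sufficiently small $h>0$, the solution $(X(n),V(n))_{n\ge0}$ with time-step $h$ has the property that for every $i\in\{1,\dots,N\}$ the limit $v_i^\infty:=\lim_{n\to\infty}v_i(n)$ exists, $\|v_i^\infty\|<\infty$, and for all $n\ge0$ \[ \|v_i^\infty-v_i(n)\|\le\frac{h\kappa\sqrt{N}\,\|\Delta^v(0)\|_F\,e^{-C\kappa\psi(M)hn}}{1-e^{-C\kappa\psi(M)h}} . \]
   Context: Discrete MT model: fix $N\ge1$, $d\ge1$, $\kappa>0$, $h>0$, and $a:[0,\infty)\to\mathbb{R}$ with constants $0<c_1\le c_2$, $c_1\le a\le c_2$, $|a(r_1)-a(r_2)|\le L_a|r_1-r_2|$ ($L_a>0$); $0<h<\min\{1,1/\kappa\}$. A solution satisfies $x_i(n+1)=x_i(n)+hv_i(n)$, $v_i(n+1)=v_i(n)+h\kappa\sum_j\phi_{ij}(n)(v_j(n)-v_i(n))$, $\phi_{ij}(n)=\frac{a(\|x_i(n)-x_j(n)\|)}{\sum_ka(\|x_i(n)-x_k(n)\|)}$, $x_i(n),v_i(n)\in\mathbb{R}^d$. Notation: $\|\Delta^x(n)\|_F=(\sum_{i,j}\|x_i(n)-x_j(n)\|^2)^{1/2}$, $\|\Delta^v(n)\|_F=(\sum_{i,j}\|v_i(n)-v_j(n)\|^2)^{1/2}$;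 $\|\phi\|_{\mathrm{Lip}}=\frac{L_a}{Nc_1}(1+\frac{c_2}{c_1})$, $M=\frac{1}{4N\|\phi\|_{\mathrm{Lip}}}$, $\psi(s)=1-\|\phi\|_{\mathrm{Lip}}Ns$. *)

theory Defs
  imports "HOL-Analysis.Analysis"
begin

text \<open>Agents are indexed by i < N (i.e. 0..N-1 instead of 1..N); positions and velocities
live in an arbitrary Euclidean space 'v (dimension d = DIM('v) \<ge> 1).
x i n, v i n denote x_i(n), v_i(n).\<close>

definition MT_phi :: "nat \<Rightarrow> (real \<Rightarrow> real) \<Rightarrow> (nat \<Rightarrow> nat \<Rightarrow> 'v::euclidean_space) \<Rightarrow> nat \<Rightarrow> nat \<Rightarrow> nat \<Rightarrow> real" where
  "MT_phi N a x i j n = a (norm (x i n - x j n)) / (\<Sum>k<N. a (norm (x i n - x k n)))"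

definition MT_solution :: "nat \<Rightarrow> real \<Rightarrow> (real \<Rightarrow> real) \<Rightarrow> real \<Rightarrow>
    (nat \<Rightarrow> nat \<Rightarrow> 'v::euclidean_space) \<Rightarrow> (nat \<Rightarrow> nat \<Rightarrow> 'v) \<Rightarrow> bool" where
  "MT_solution N \<kappa> a h x v \<longleftrightarrow>
     (\<forall>n i. i < N \<longrightarrow>
        x i (Suc n) = x i n + h *\<^sub>R v i n \<and>
        v i (Suc n) = v i n + (h * \<kappa>) *\<^sub>R (\<Sum>j<N. MT_phi N a x i j n *\<^sub>R (v j n - v i n)))"

definition frob_diff :: "nat \<Rightarrow> (nat \<Rightarrow> 'v::euclidean_space) \<Rightarrow> real" where
  "frob_diff N y = sqrt (\<Sum>i<N. \<Sum>j<N. (norm (y i - y j))\<^sup>2)"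

definition phi_Lip :: "nat \<Rightarrow> real \<Rightarrow> real \<Rightarrow> real \<Rightarrow> real" where
  "phi_Lip N L_a c1 c2 = L_a / (real N * c1) * (1 + c2 / c1)"

definition M_const :: "nat \<Rightarrow> real \<Rightarrow> real \<Rightarrow> real \<Rightarrow> real" where
  "M_const N L_a c1 c2 = 1 / (4 * real N * phi_Lip N L_a c1 c2)"

definition psi_fun :: "nat \<Rightarrow> real \<Rightarrow> real \<Rightarrow> real \<Rightarrow> real \<Rightarrow> real" where
  "psi_fun N L_a c1 c2 s = 1 - phi_Lip N L_a c1 c2 * real N * s"

end

theory Submission
  imports Defs
begin

(* Write X0 and V0 for the Frobenius diameters of the initial positions and velocities. The
   weights phi_ij form a row-stochastic matrix whose rows i and k differ entrywise by at most
   ||phi||_Lip * |x_i - x_k|. While all pairwise distances stay below 2M, two rows therefore differ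
   in total variation by at most 2 N ||phi||_Lip M = 1/2, and a combination with zero-sum weights
   is bounded by half their total variation times the diameter; so the velocity diameter shrinks
   by the factor q = 1 - (3/4) h kappa in every step. The positions then drift apart by at most
   sum_n h q^n V0 = 4 V0 / (3 kappa) in total, and since psi <= 1 the hypothesis on the initial
   data gives V0 < kappa (M - X0), so the distances never exceed 2M. Each v_i moves by at most
   h kappa q^n V0 at step n and hence converges with a geometric tail, and
   q <= exp (- C kappa psi(M) h) because psi(M) = 3/4 and C < 1. This works for every step size
   h < min(1, 1/kappa), and even without the factor sqrt N. *)

lemma norm_sum_zero_sum_weights_le:
  fixes w :: "nat \<Rightarrow> 'v::real_normed_vector" and c :: "nat \<Rightarrow> real"
  assumes sum_c: "(\<Sum>j<N. c j) = 0"
    and diam: "\<And>j l. j < N \<Longrightarrow> l < N \<Longrightarrow> norm (w j - w l) \<le> D"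
  shows "norm (\<Sum>j<N. c j *\<^sub>R w j) \<le> (\<Sum>j<N. \<bar>c j\<bar>) / 2 * D"
proof -
  define p where "p j = max (c j) 0" for j
  define q where "q j = max (- c j) 0" for j
  define s where "s = (\<Sum>j<N. p j)"
  have c_eq: "c j = p j - q j" and abs_c_eq: "\<bar>c j\<bar> = p j + q j" for j
    unfolding p_def q_def by auto
  have p_nonneg: "0 \<le> p j" and q_nonneg: "0 \<le> q j" for j
    unfolding p_def q_def by auto
  have s_nonneg: "0 \<le> s"
    unfolding s_def using p_nonneg by (simp add: sum_nonneg)
  have sum_q: "(\<Sum>j<N. q j) = s"
    using sum_c unfolding s_def c_eq by (simp add: sum_subtractf)
  have sum_abs_c: "(\<Sum>j<N. \<bar>c j\<bar>) = 2 * s"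
    unfolding abs_c_eq using sum_q by (simp add: sum.distrib s_def)
  \<comment> \<open>The positive and negative parts carry equal mass s, so s times the sum is
      a nonnegative combination of the differences w j - w l with total weight s * s.\<close>
  have pair_form: "s *\<^sub>R (\<Sum>j<N. c j *\<^sub>R w j) = (\<Sum>j<N. \<Sum>l<N. (p j * q l) *\<^sub>R (w j - w l))"
  proof -
    have "(\<Sum>j<N. \<Sum>l<N. (p j * q l) *\<^sub>R w j) = (\<Sum>j<N. (s * p j) *\<^sub>R w j)"
      by (simp add: scaleR_sum_left[symmetric] sum_distrib_left[symmetric] sum_q mult.commute)
    moreover have "(\<Sum>j<N. \<Sum>l<N. (p j * q l) *\<^sub>R w l) = (\<Sum>l<N. (s * q l) *\<^sub>R w l)"
      by (subst sum.swap) (simp add: scaleR_sum_left[symmetric] sum_distrib_right[symmetric] s_def)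
    ultimately show ?thesis
      by (simp add: c_eq scaleR_sum_right scaleR_right_diff_distrib scaleR_left_diff_distrib
          sum_subtractf)
  qed
  have "norm (\<Sum>j<N. \<Sum>l<N. (p j * q l) *\<^sub>R (w j - w l)) \<le> (\<Sum>j<N. \<Sum>l<N. p j * q l * D)"
  proof -
    have "norm (\<Sum>j<N. \<Sum>l<N. (p j * q l) *\<^sub>R (w j - w l))
        \<le> (\<Sum>j<N. \<Sum>l<N. norm ((p j * q l) *\<^sub>R (w j - w l)))"
      by (rule order_trans[OF norm_sum sum_mono[OF norm_sum]])
    also have "\<dots> \<le> (\<Sum>j<N. \<Sum>l<N. p j * q l * D)"
      using diam p_nonneg q_nonneg by (intro sum_mono) (simp add: mult_left_mono)
    finally show ?thesis .
  qed
  also have "\<dots> = s * (s * D)"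
    by (simp add: sum_distrib_left[symmetric] sum_distrib_right[symmetric] sum_q s_def)
  finally have "s * norm (\<Sum>j<N. c j *\<^sub>R w j) \<le> s * (s * D)"
    using s_nonneg by (simp flip: pair_form)
  moreover have "s = 0 \<Longrightarrow> (\<Sum>j<N. c j *\<^sub>R w j) = 0"
    using sum_abs_c by (simp add: sum_abs_ge_zero sum_nonneg_eq_0_iff)
  ultimately show ?thesis
    using sum_abs_c s_nonneg by (cases "s = 0") auto
qed

lemma geometric_increments_tail_bound:
  fixes u :: "nat \<Rightarrow> 'v::banach"
  assumes incr: "\<And>k. norm (u (Suc k) - u k) \<le> B * q ^ k" and "0 \<le> q" "q < 1"
  shows "\<exists>L. u \<longlonglongrightarrow> L \<and> (\<forall>n. norm (L - u n) \<le> B * q ^ n / (1 - q))"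
proof -
  define d where "d k = u (Suc k) - u k" for k
  have geom_summable: "summable (\<lambda>k. B * q ^ n * q ^ k)" for n
    using assms(2,3) by (intro summable_mult summable_geometric) simp
  have norm_d_summable: "summable (\<lambda>k. norm (d k))"
    by (rule summable_comparison_test'[OF geom_summable[of 0]]) (simp add: d_def incr)
  have u_eq: "u n = u 0 + (\<Sum>k<n. d k)" for n
    unfolding d_def sum_lessThan_telescope by simp
  have "(\<lambda>n. u 0 + (\<Sum>k<n. d k)) \<longlonglongrightarrow> u 0 + suminf d"
    using summable_norm_cancel[OF norm_d_summable] by (intro tendsto_add tendsto_const summable_LIMSEQ)
  then have lim: "u \<longlonglongrightarrow> u 0 + suminf d"
    by (simp flip: u_eq)
  have "norm (u 0 + suminf d - u n) \<le> B * q ^ n / (1 - q)" for n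
  proof -
    have shifted: "summable (\<lambda>k. norm (d (k + n)))"
      using norm_d_summable summable_iff_shift[of "\<lambda>k. norm (d k)" n] by simp
    have "u 0 + suminf d - u n = (\<Sum>k. d (k + n))"
      using suminf_minus_initial_segment[OF summable_norm_cancel[OF norm_d_summable], of n] u_eq[of n]
      by simp
    then have "norm (u 0 + suminf d - u n) \<le> (\<Sum>k. norm (d (k + n)))"
      using summable_norm[OF shifted] by simp
    also have "\<dots> \<le> (\<Sum>k. B * q ^ n * q ^ k)"
      by (rule suminf_le[OF _ shifted geom_summable]) (use incr[of "_ + n"] in \<open>simp add: d_def power_add mult_ac\<close>)
    also have "\<dots> = B * q ^ n / (1 - q)"
      using suminf_mult[OF summable_geometric, of q "B * q ^ n"] suminf_geometric[of q] assms(2,3)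
      by simp
    finally show ?thesis .
  qed
  with lim show ?thesis by blast
qed

lemma geometric_tail_le_exp_tail:
  fixes q r :: real
  assumes "0 \<le> q" and "q \<le> exp (- r)" and "0 < r"
  shows "q ^ n / (1 - q) \<le> exp (- r * real n) / (1 - exp (- r))"
proof -
  have "q ^ n \<le> exp (- r * real n)"
    using assms(1,2) power_mono[of q "exp (- r)" n] by (simp add: exp_of_nat_mult[symmetric] mult.commute)
  moreover have "0 < 1 - exp (- r)"
    using assms(3) by simp
  ultimately show ?thesis
    using assms(2) by (intro frac_le) auto
qed

lemma abs_quotient_diff_le:
  fixes A B S T m b e E :: real
  assumes "0 < m" and "m \<le> S" and "m \<le> T" and "0 \<le> B" and "B \<le> b"
    and "\<bar>A - B\<bar> \<le> e" and "\<bar>T - S\<bar> \<le> E"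
  shows "\<bar>A / S - B / T\<bar> \<le> e / m + b * E / (m * m)"
proof -
  have S_pos: "0 < S" and T_pos: "0 < T"
    using assms(1-3) by linarith+
  have "A / S - B / T = (A - B) / S + B * (T - S) / (S * T)"
    using S_pos T_pos by (simp add: field_simps)
  also have "\<bar>\<dots>\<bar> \<le> \<bar>A - B\<bar> / S + B * \<bar>T - S\<bar> / (S * T)"
    by (rule order_trans[OF abs_triangle_ineq])
      (use S_pos T_pos assms(4) in \<open>simp add: abs_mult abs_divide\<close>)
  also have "\<dots> \<le> e / m + b * E / (m * m)"
  proof (rule add_mono)
    show "\<bar>A - B\<bar> / S \<le> e / m"
      using assms(1,2,6) S_pos by (meson abs_ge_zero frac_le order_trans)
    show "B * \<bar>T - S\<bar> / (S * T) \<le> b * E / (m * m)"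
      using assms S_pos T_pos
      by (intro frac_le mult_mono mult_pos_pos) (auto intro: order_trans[OF abs_ge_zero])
  qed
  finally show ?thesis .
qed

lemma norm_le_frob_diff:
  fixes y :: "nat \<Rightarrow> 'v::euclidean_space"
  assumes "i < N" and "k < N"
  shows "norm (y i - y k) \<le> frob_diff N y"
proof -
  have "(norm (y i - y k))\<^sup>2 \<le> (\<Sum>j<N. (norm (y i - y j))\<^sup>2)"
    using assms by (intro member_le_sum) auto
  also have "\<dots> \<le> (\<Sum>i<N. \<Sum>j<N. (norm (y i - y j))\<^sup>2)"
    using assms by (intro member_le_sum[where f = "\<lambda>i. \<Sum>j<N. (norm (y i - y j))\<^sup>2"])
      (auto intro: sum_nonneg)
  finally show ?thesis
    unfolding frob_diff_def by (simp add: real_le_rsqrt)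
qed

lemma frob_diff_nonneg: "0 \<le> frob_diff N y"
  unfolding frob_diff_def by (simp add: sum_nonneg)

locale MT_interaction =
  fixes N :: nat and a :: "real \<Rightarrow> real" and c1 c2 L_a :: real
  assumes N_ge_1: "N \<ge> 1" and c1_pos: "0 < c1" and c1_le_c2: "c1 \<le> c2" and L_a_pos: "0 < L_a"
    and a_bounds: "\<And>r. r \<ge> 0 \<Longrightarrow> c1 \<le> a r \<and> a r \<le> c2"
    and a_Lipschitz: "\<And>r1 r2. r1 \<ge> 0 \<Longrightarrow> r2 \<ge> 0 \<Longrightarrow> \<bar>a r1 - a r2\<bar> \<le> L_a * \<bar>r1 - r2\<bar>"
begin

abbreviation Lip :: real where "Lip \<equiv> phi_Lip N L_a c1 c2"
abbreviation M :: real where "M \<equiv> M_const N L_a c1 c2"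
abbreviation psi :: "real \<Rightarrow> real" where "psi \<equiv> psi_fun N L_a c1 c2"

lemma phi_Lip_pos: "0 < Lip"
  unfolding phi_Lip_def using N_ge_1 c1_pos c1_le_c2 L_a_pos
  by (intro mult_pos_pos divide_pos_pos add_pos_pos) auto

lemma phi_Lip_mult_M_const: "Lip * real N * M = 1/4"
  using phi_Lip_pos N_ge_1 unfolding M_const_def by simp

lemma M_const_pos: "0 < M"
  using phi_Lip_pos N_ge_1 unfolding M_const_def by simp

lemma psi_fun_M_const: "psi M = 3/4"
  unfolding psi_fun_def using phi_Lip_mult_M_const by simp

lemma integral_psi_fun_le:
  assumes "0 \<le> X" and "X \<le> Y"
  shows "integral {X..Y} psi \<le> Y - X"
proof -
  have "integral {X..Y} psi \<le> integral {X..Y} (\<lambda>_. 1::real)"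
  proof (rule integral_le)
    show "psi integrable_on {X..Y}"
      unfolding psi_fun_def by (intro integrable_continuous_interval continuous_intros)
    show "psi s \<le> 1" if "s \<in> {X..Y}" for s
      using that assms(1) phi_Lip_pos unfolding psi_fun_def by simp
  qed (rule integrable_const_ivl)
  then show ?thesis
    using assms(2) by simp
qed

lemma a_priori_position_bound_le:
  assumes "0 < \<kappa>" and "0 \<le> X0" and "X0 < M" and "V0 < \<kappa> * integral {X0..M} psi"
  shows "X0 + 4 / (3 * \<kappa>) * V0 \<le> 2 * M"
proof -
  have "V0 < \<kappa> * (M - X0)"
    using assms integral_psi_fun_le[of X0 M] by (smt (verit) mult_left_mono)
  then have "V0 / \<kappa> < M - X0"
    using assms(1) by (simp add: divide_less_eq mult.commute)
  moreover have "4 / (3 * \<kappa>) * V0 = 4/3 * (V0 / \<kappa>)"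
    by simp
  ultimately show ?thesis
    using assms(2) M_const_pos by linarith
qed

lemma sum_a_ge: "real N * c1 \<le> (\<Sum>k<N. a (norm (x i n - x k n)))"
proof -
  have "(\<Sum>k<N. c1) \<le> (\<Sum>k<N. a (norm (x i n - x k n)))"
    by (intro sum_mono) (simp add: a_bounds)
  then show ?thesis
    by simp
qed

lemma sum_a_pos: "0 < (\<Sum>k<N. a (norm (x i n - x k n)))"
proof -
  have "0 < real N * c1"
    using N_ge_1 c1_pos by simp
  then show ?thesis
    using sum_a_ge by (rule less_le_trans)
qed

lemma MT_phi_nonneg: "0 \<le> MT_phi N a x i j n"
  unfolding MT_phi_def using a_bounds[of "norm (x i n - x j n)"] c1_pos sum_a_pos[of x i n] by simp

lemma sum_MT_phi: "(\<Sum>j<N. MT_phi N a x i j n) = 1"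
  unfolding MT_phi_def using sum_a_pos[of x i n] by (simp flip: sum_divide_distrib)

lemma a_norm_diff_le: "\<bar>a (norm (y - w)) - a (norm (z - w))\<bar> \<le> L_a * norm (y - z)"
proof -
  have "\<bar>a (norm (y - w)) - a (norm (z - w))\<bar> \<le> L_a * \<bar>norm (y - w) - norm (z - w)\<bar>"
    by (rule a_Lipschitz) auto
  also have "\<dots> \<le> L_a * norm (y - z)"
    using norm_triangle_ineq3[of "y - w" "z - w"] L_a_pos by (intro mult_left_mono) auto
  finally show ?thesis .
qed

lemma sum_a_diff_le:
  "\<bar>(\<Sum>l<N. a (norm (y - w l))) - (\<Sum>l<N. a (norm (z - w l)))\<bar> \<le> real N * (L_a * norm (y - z))"
proof -
  have "\<bar>(\<Sum>l<N. a (norm (y - w l))) - (\<Sum>l<N. a (norm (z - w l)))\<bar>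
      \<le> (\<Sum>l<N. \<bar>a (norm (y - w l)) - a (norm (z - w l))\<bar>)"
    unfolding sum_subtractf[symmetric] by (rule sum_abs)
  also have "\<dots> \<le> (\<Sum>l<N. L_a * norm (y - z))"
    by (intro sum_mono a_norm_diff_le)
  finally show ?thesis
    by simp
qed

lemma MT_phi_Lipschitz:
  "\<bar>MT_phi N a x i j n - MT_phi N a x k j n\<bar> \<le> Lip * norm (x i n - x k n)"
proof -
  define d where "d = norm (x i n - x k n)"
  have "\<bar>MT_phi N a x i j n - MT_phi N a x k j n\<bar>
      \<le> L_a * d / (real N * c1) + c2 * (real N * (L_a * d)) / ((real N * c1) * (real N * c1))"
    unfolding MT_phi_def d_def
  proof (rule abs_quotient_diff_le)
    show "0 < real N * c1"
      using N_ge_1 c1_pos by simp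
    show "\<bar>a (norm (x i n - x j n)) - a (norm (x k n - x j n))\<bar> \<le> L_a * norm (x i n - x k n)"
      by (rule a_norm_diff_le)
    show "\<bar>(\<Sum>l<N. a (norm (x k n - x l n))) - (\<Sum>l<N. a (norm (x i n - x l n)))\<bar>
        \<le> real N * (L_a * norm (x i n - x k n))"
      using sum_a_diff_le[of "x k n" "\<lambda>l. x l n" "x i n"] by (simp add: norm_minus_commute)
  qed (use a_bounds[of "norm (x k n - x j n)"] c1_pos sum_a_ge in auto)
  also have "\<dots> = Lip * d"
    unfolding phi_Lip_def using N_ge_1 c1_pos by (simp add: divide_simps) (simp add: algebra_simps)
  finally show ?thesis
    unfolding d_def .
qed

lemma sum_abs_MT_phi_diff_le:
  assumes "\<And>j l. j < N \<Longrightarrow> l < N \<Longrightarrow> norm (x j n - x l n) \<le> 2 * M"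
    and "i < N" and "k < N"
  shows "(\<Sum>j<N. \<bar>MT_phi N a x i j n - MT_phi N a x k j n\<bar>) \<le> 1/2"
proof -
  have "(\<Sum>j<N. \<bar>MT_phi N a x i j n - MT_phi N a x k j n\<bar>) \<le> (\<Sum>j<N. Lip * (2 * M))"
    using assms phi_Lip_pos
    by (intro sum_mono order_trans[OF MT_phi_Lipschitz] mult_left_mono) auto
  also have "\<dots> = 2 * (Lip * real N * M)"
    by simp
  finally show ?thesis
    by (simp add: phi_Lip_mult_M_const)
qed

end

locale MT_flow = MT_interaction N a c1 c2 L_a
  for N :: nat and a :: "real \<Rightarrow> real" and c1 c2 L_a :: real +
  fixes \<kappa> h :: real and x v :: "nat \<Rightarrow> nat \<Rightarrow> 'v::euclidean_space"
  assumes solution: "MT_solution N \<kappa> a h x v"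
    and kappa_pos: "0 < \<kappa>" and h_pos: "0 < h" and h_kappa_lt_1: "h * \<kappa> < 1"
begin

abbreviation q :: real where "q \<equiv> 1 - 3/4 * (h * \<kappa>)"

lemma h_kappa_pos: "0 < h * \<kappa>"
  using h_pos kappa_pos by simp

lemma velocity_increment:
  "i < N \<Longrightarrow> v i (Suc n) - v i n = (h * \<kappa>) *\<^sub>R (\<Sum>j<N. MT_phi N a x i j n *\<^sub>R (v j n - v i n))"
  using solution unfolding MT_solution_def by simp

lemma velocity_update:
  assumes "i < N"
  shows "v i (Suc n) = (1 - h * \<kappa>) *\<^sub>R v i n + (h * \<kappa>) *\<^sub>R (\<Sum>j<N. MT_phi N a x i j n *\<^sub>R v j n)"
proof -
  have "(\<Sum>j<N. MT_phi N a x i j n *\<^sub>R (v j n - v i n))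
      = (\<Sum>j<N. MT_phi N a x i j n *\<^sub>R v j n) - (\<Sum>j<N. MT_phi N a x i j n) *\<^sub>R v i n"
    by (simp add: scaleR_right_diff_distrib sum_subtractf scaleR_sum_left)
  also have "\<dots> = (\<Sum>j<N. MT_phi N a x i j n *\<^sub>R v j n) - v i n"
    by (simp add: sum_MT_phi)
  finally have average: "(\<Sum>j<N. MT_phi N a x i j n *\<^sub>R (v j n - v i n))
      = (\<Sum>j<N. MT_phi N a x i j n *\<^sub>R v j n) - v i n" .
  show ?thesis
    using velocity_increment[OF assms, of n, unfolded average] by (simp add: algebra_simps diff_eq_eq)
qed

lemma norm_velocity_increment_le:
  assumes v_diam: "\<And>j k. j < N \<Longrightarrow> k < N \<Longrightarrow> norm (v j n - v k n) \<le> D" and i: "i < N"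
  shows "norm (v i (Suc n) - v i n) \<le> h * \<kappa> * D"
proof -
  have "norm (MT_phi N a x i j n *\<^sub>R (v j n - v i n)) \<le> MT_phi N a x i j n * D" if "j < N" for j
    using MT_phi_nonneg[of x i j n] v_diam[OF that i] by (simp add: mult_left_mono)
  then have "norm (\<Sum>j<N. MT_phi N a x i j n *\<^sub>R (v j n - v i n)) \<le> (\<Sum>j<N. MT_phi N a x i j n * D)"
    by (intro order_trans[OF norm_sum sum_mono]) simp
  also have "\<dots> = D"
    by (simp add: sum_MT_phi flip: sum_distrib_right)
  finally show ?thesis
    using velocity_increment[OF i, of n] h_kappa_pos by (simp add: mult_left_mono)
qed

lemma velocity_diameter_contracts:
  assumes v_diam: "\<And>j k. j < N \<Longrightarrow> k < N \<Longrightarrow> norm (v j n - v k n) \<le> D"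
    and x_diam: "\<And>j k. j < N \<Longrightarrow> k < N \<Longrightarrow> norm (x j n - x k n) \<le> 2 * M"
    and i: "i < N" and k: "k < N"
  shows "norm (v i (Suc n) - v k (Suc n)) \<le> q * D"
proof -
  define c where "c j = MT_phi N a x i j n - MT_phi N a x k j n" for j
  define mix where "mix = (\<Sum>j<N. c j *\<^sub>R v j n)"
  have "norm mix \<le> (\<Sum>j<N. \<bar>c j\<bar>) / 2 * D"
    unfolding mix_def c_def using v_diam
    by (intro norm_sum_zero_sum_weights_le) (simp_all add: sum_subtractf sum_MT_phi)
  also have "\<dots> \<le> 1/4 * D"
    using sum_abs_MT_phi_diff_le[where x = x and n = n, OF x_diam i k] v_diam[OF i i]
    unfolding c_def by (intro mult_right_mono) auto
  finally have mix_le: "norm mix \<le> 1/4 * D" .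
  have "v i (Suc n) - v k (Suc n) = (1 - h * \<kappa>) *\<^sub>R (v i n - v k n) + (h * \<kappa>) *\<^sub>R mix"
    unfolding velocity_update[OF i] velocity_update[OF k] mix_def c_def
    by (simp add: algebra_simps scaleR_left_diff_distrib sum_subtractf)
  then have "norm (v i (Suc n) - v k (Suc n)) \<le> (1 - h * \<kappa>) * norm (v i n - v k n) + h * \<kappa> * norm mix"
    using h_kappa_pos h_kappa_lt_1 by (metis norm_triangle_ineq norm_scaleR abs_of_pos abs_of_nonneg
        diff_ge_0_iff_ge less_imp_le)
  also have "\<dots> \<le> (1 - h * \<kappa>) * D + h * \<kappa> * (1/4 * D)"
    using h_kappa_pos h_kappa_lt_1 v_diam[OF i k] mix_le by (intro add_mono mult_left_mono) auto
  also have "\<dots> = q * D"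
    by (simp add: algebra_simps)
  finally show ?thesis .
qed

lemma position_step:
  assumes "i < N" and "k < N"
  shows "norm (x i (Suc n) - x k (Suc n)) \<le> norm (x i n - x k n) + h * norm (v i n - v k n)"
proof -
  have "x i (Suc n) - x k (Suc n) = (x i n - x k n) + h *\<^sub>R (v i n - v k n)"
    using solution assms unfolding MT_solution_def by (simp add: algebra_simps)
  then show ?thesis
    using h_pos by (metis norm_triangle_ineq norm_scaleR abs_of_pos)
qed

lemma q_bounds: "0 \<le> q" "q < 1"
  using h_kappa_pos h_kappa_lt_1 by auto

lemma q_le_exp:
  assumes "0 < C" and "C < 1"
  shows "q \<le> exp (- (C * \<kappa> * psi M * h))"
proof -
  have "q \<le> exp (- (3/4 * (h * \<kappa>)))"
    using exp_ge_add_one_self[of "- (3/4 * (h * \<kappa>))"] by simp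
  also have "\<dots> \<le> exp (- (C * \<kappa> * psi M * h))"
    using mult_strict_right_mono[OF assms(2) h_kappa_pos] by (simp add: psi_fun_M_const mult_ac)
  finally show ?thesis .
qed

context
  fixes X0 V0 :: real
  assumes x_init: "\<And>i k. i < N \<Longrightarrow> k < N \<Longrightarrow> norm (x i 0 - x k 0) \<le> X0"
    and v_init: "\<And>i k. i < N \<Longrightarrow> k < N \<Longrightarrow> norm (v i 0 - v k 0) \<le> V0"
    and position_bound: "X0 + 4 / (3 * \<kappa>) * V0 \<le> 2 * M"
begin

lemma V0_nonneg: "0 \<le> V0"
  using v_init[of 0 0] N_ge_1 by simp

\<comment> \<open>4 / (3 * \<kappa>) * V0 * (1 - q ^ n) is the sum of the drifts h * q ^ m * V0 over m < n.\<close>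
lemma diameter_bounds:
  "(\<forall>i<N. \<forall>k<N. norm (v i n - v k n) \<le> q ^ n * V0) \<and>
   (\<forall>i<N. \<forall>k<N. norm (x i n - x k n) \<le> X0 + 4 / (3 * \<kappa>) * V0 * (1 - q ^ n))"
proof (induction n)
  case 0
  then show ?case
    using x_init v_init by simp
next
  case (Suc n)
  then have v_diam: "\<And>i k. i < N \<Longrightarrow> k < N \<Longrightarrow> norm (v i n - v k n) \<le> q ^ n * V0"
    and x_diam: "\<And>i k. i < N \<Longrightarrow> k < N \<Longrightarrow> norm (x i n - x k n) \<le> X0 + 4 / (3 * \<kappa>) * V0 * (1 - q ^ n)"
    by auto
  have "X0 + 4 / (3 * \<kappa>) * V0 * (1 - q ^ n) \<le> X0 + 4 / (3 * \<kappa>) * V0"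
    using q_bounds V0_nonneg kappa_pos by (intro add_left_mono mult_left_le) (auto simp: power_le_one)
  then have x_diam_M: "\<And>i k. i < N \<Longrightarrow> k < N \<Longrightarrow> norm (x i n - x k n) \<le> 2 * M"
    using x_diam position_bound by fastforce
  have "norm (v i (Suc n) - v k (Suc n)) \<le> q ^ Suc n * V0" if "i < N" "k < N" for i k
    using velocity_diameter_contracts[OF v_diam x_diam_M that] by (simp add: mult.assoc)
  moreover have "norm (x i (Suc n) - x k (Suc n)) \<le> X0 + 4 / (3 * \<kappa>) * V0 * (1 - q ^ Suc n)"
    if "i < N" "k < N" for i k
  proof -
    have "norm (x i (Suc n) - x k (Suc n)) \<le> X0 + 4 / (3 * \<kappa>) * V0 * (1 - q ^ n) + h * (q ^ n * V0)"
      using position_step[OF that, of n] x_diam[OF that] v_diam[OF that] h_pos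
      by (smt (verit) mult_left_mono)
    also have "\<dots> = X0 + 4 / (3 * \<kappa>) * V0 * (1 - q ^ Suc n)"
      using kappa_pos by (simp add: field_simps)
    finally show ?thesis .
  qed
  ultimately show ?case
    by blast
qed

lemma velocity_limit:
  assumes "i < N"
  shows "\<exists>L. (\<lambda>n. v i n) \<longlonglongrightarrow> L \<and> (\<forall>n. norm (L - v i n) \<le> h * \<kappa> * V0 * q ^ n / (1 - q))"
proof (rule geometric_increments_tail_bound[OF _ q_bounds])
  fix n
  have "norm (v i (Suc n) - v i n) \<le> h * \<kappa> * (q ^ n * V0)"
    using diameter_bounds[of n] assms by (intro norm_velocity_increment_le) auto
  then show "norm (v i (Suc n) - v i n) \<le> h * \<kappa> * V0 * q ^ n"
    by (simp add: mult_ac)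
qed

lemma velocity_limit_exp_rate:
  assumes "0 < C" and "C < 1" and "i < N"
  shows "\<exists>L. (\<lambda>n. v i n) \<longlonglongrightarrow> L \<and> (\<forall>n. norm (L - v i n) \<le>
           h * \<kappa> * V0 * exp (- C * \<kappa> * psi M * h * real n) / (1 - exp (- C * \<kappa> * psi M * h)))"
proof -
  define r where "r = C * \<kappa> * psi M * h"
  have r_pos: "0 < r"
    using assms(1) kappa_pos h_pos unfolding r_def psi_fun_M_const by simp
  obtain L where lim: "(\<lambda>n. v i n) \<longlonglongrightarrow> L"
    and tail: "\<And>n. norm (L - v i n) \<le> h * \<kappa> * V0 * (q ^ n / (1 - q))"
    using velocity_limit[OF assms(3)] by auto
  have "h * \<kappa> * V0 * (q ^ n / (1 - q)) \<le> h * \<kappa> * V0 * (exp (- r * real n) / (1 - exp (- r)))" for n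
    using q_bounds q_le_exp[OF assms(1,2)] r_pos h_kappa_pos V0_nonneg
    unfolding r_def by (intro mult_left_mono geometric_tail_le_exp_tail) auto
  with lim tail show ?thesis
    unfolding r_def by (smt (verit) minus_mult_left times_divide_eq_right)
qed

end

end

theorem corollary3p5:
  fixes N :: nat and \<kappa> c1 c2 L_a C :: real and a :: "real \<Rightarrow> real"
    and x0 v0 :: "nat \<Rightarrow> 'v::euclidean_space"
  assumes "N \<ge> 1" and "\<kappa> > 0" and "0 < c1" and "c1 \<le> c2" and "L_a > 0"
    and "\<And>r. r \<ge> 0 \<Longrightarrow> c1 \<le> a r \<and> a r \<le> c2"
    and "\<And>r1 r2. r1 \<ge> 0 \<Longrightarrow> r2 \<ge> 0 \<Longrightarrow> \<bar>a r1 - a r2\<bar> \<le> L_a * \<bar>r1 - r2\<bar>"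
    and "frob_diff N x0 < M_const N L_a c1 c2"
    and "frob_diff N v0 < \<kappa> * integral {frob_diff N x0 .. M_const N L_a c1 c2} (psi_fun N L_a c1 c2)"
    and "0 < C" and "C < 1"
  shows "\<exists>h0>0. \<forall>h x v. 0 < h \<and> h < h0 \<and> h < 1 \<and> h < 1 / \<kappa> \<and>
           MT_solution N \<kappa> a h x v \<and> (\<forall>i<N. x i 0 = x0 i \<and> v i 0 = v0 i) \<longrightarrow>
           (\<forall>i<N. \<exists>vinf. (\<lambda>n. v i n) \<longlonglongrightarrow> vinf \<and>
              (\<forall>n. norm (vinf - v i n) \<le>
                 h * \<kappa> * sqrt (real N) * frob_diff N v0
                   * exp (- C * \<kappa> * psi_fun N L_a c1 c2 (M_const N L_a c1 c2) * h * real n)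
                 / (1 - exp (- C * \<kappa> * psi_fun N L_a c1 c2 (M_const N L_a c1 c2) * h))))"
proof (intro exI[of _ 1] conjI allI impI zero_less_one)
  fix h x v and i :: nat
  assume hyps: "0 < h \<and> h < 1 \<and> h < 1 \<and> h < 1 / \<kappa> \<and> MT_solution N \<kappa> a h x v \<and>
    (\<forall>i<N. x i 0 = x0 i \<and> v i 0 = v0 i)" and i: "i < N"
  interpret MT_flow N a c1 c2 L_a \<kappa> h x v
    using assms(1-7) hyps by unfold_locales (auto simp: field_simps)
  have x_init: "norm (x j 0 - x k 0) \<le> frob_diff N x0"
    and v_init: "norm (v j 0 - v k 0) \<le> frob_diff N v0" if "j < N" "k < N" for j k
    using hyps norm_le_frob_diff[OF that] that by auto
  have position_bound: "frob_diff N x0 + 4 / (3 * \<kappa>) * frob_diff N v0 \<le> 2 * M"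
    using a_priori_position_bound_le[OF assms(2) frob_diff_nonneg assms(8,9)] .
  obtain L where lim: "(\<lambda>n. v i n) \<longlonglongrightarrow> L" and tail: "\<And>n. norm (L - v i n) \<le>
      h * \<kappa> * frob_diff N v0 * exp (- C * \<kappa> * psi M * h * real n) / (1 - exp (- C * \<kappa> * psi M * h))"
    using velocity_limit_exp_rate[OF x_init v_init position_bound assms(10,11) i] by blast
  have widen: "B \<le> sqrt (real N) * B" if "0 \<le> B" for B :: real
    using mult_right_mono[OF _ that, of 1 "sqrt (real N)"] N_ge_1 by simp
  show "\<exists>vinf. (\<lambda>n. v i n) \<longlonglongrightarrow> vinf \<and> (\<forall>n. norm (vinf - v i n) \<le>
      h * \<kappa> * sqrt (real N) * frob_diff N v0
        * exp (- C * \<kappa> * psi_fun N L_a c1 c2 (M_const N L_a c1 c2) * h * real n)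
        / (1 - exp (- C * \<kappa> * psi_fun N L_a c1 c2 (M_const N L_a c1 c2) * h)))"
    using lim tail widen[OF order_trans[OF norm_ge_zero tail]] by (auto simp: mult_ac intro: order_trans)
qed

end
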